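(* For $\lambda,\mu\in\Lambda$ we have $\lambda\leq\mu$ in the Bruhat order if and only if $$\sum_{\substack{1\le i\le n_1+\cdots+n_k\\(\lambda+\rho,\delta_i)\le h}}(-1)^{p_i}\;\geq\sum_{\substack{1\le i\le n_1+\cdots+n_k\\(\mu+\rho,\delta_i)\le h}}(-1)^{p_i}$$ for all $h\in\mathbb{Z}$ and $1\leq k\leq l$, with equality whenever $k=l$.
   Context: Let $(\underline{n},\underline{c})\in\mathbb{N}^l\times\{0,1\}^l$ and $\mathfrak{g}=\mathfrak{gl}(U)$ for the superspace $U=U_1\oplus\cdots\oplus U_l$, $U_i$ of dimension $n_i$ in parity $\bar c_i$, over an algebraically closed field of characteristic $0$. Homogeneous basis $u_1,\dots,u_{m+n}$ ($m+n=\sum n_i$) concatenating bases of $U_1,\dots,U_l$; $p_i$ the parity of $u_i$; $\delta_i$ the standard basis of $\mathfrak{t}^*$ dual to the diagonal matrix units, $(\delta_i,\delta_j)=(-1)^{p_i}\delta_{ij}$; $\rho=-\sum_{i<j}(-1)^{p_i+p_j}\delta_j-\sum_{p_i=\bar1}\delta_i$; $\mathfrak{t}^*_{\mathbb{Z}}=\bigoplus\mathbb{Z}\delta_i$. Bruhat order: $\lambda\leq\mu$ iff for all $h\in\mathbb{Z}$ and $1\le j\le m+n$, $\sum_{1\le i\le j,\,(\lambda+\rho,\delta_i)\le h}(-1)^{p_i}\geq\sum_{1\le i\le j,\,(\mu+\rho,\delta_i)\le h}(-1)^{p_i}$, with equality when $j=m+n$. $\Lambda:=\{\lambda\in\mathfrak{t}^*_{\mathbb{Z}}:(-1)^{c_k}(\lambda+\rho,\delta_i-\delta_{i+1})>0$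 for all $1\le k\le l$ and $n_1+\cdots+n_{k-1}<i<n_1+\cdots+n_k\}$. *)

theory Defs
  imports Main
begin

text \<open>Data: l blocks; block k (1 <= k <= l) has dimension n k and parity c k
  (True = odd). Basis indices are 1..dimU n l, block k occupies indices
  psum n (k-1) < i <= psum n k. Weights in t*_Z are integer coefficient
  functions lam :: nat => int, lam i = coefficient of delta_i (zero off 1..dimU).\<close>

definition psum :: "(nat \<Rightarrow> nat) \<Rightarrow> nat \<Rightarrow> nat" where
  "psum n k = (\<Sum>j=1..k. n j)"

definition dimU :: "(nat \<Rightarrow> nat) \<Rightarrow> nat \<Rightarrow> nat" where
  "dimU n l = psum n l"

definition par :: "(nat \<Rightarrow> nat) \<Rightarrow> (nat \<Rightarrow> bool) \<Rightarrow> nat \<Rightarrow> nat \<Rightarrow> bool" where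
  "par n c l i = (\<exists>k\<in>{1..l}. psum n (k-1) < i \<and> i \<le> psum n k \<and> c k)"

definition sg :: "(nat \<Rightarrow> nat) \<Rightarrow> (nat \<Rightarrow> bool) \<Rightarrow> nat \<Rightarrow> nat \<Rightarrow> int" where
  "sg n c l i = (if par n c l i then -1 else 1)"

definition weights :: "(nat \<Rightarrow> nat) \<Rightarrow> nat \<Rightarrow> (nat \<Rightarrow> int) set" where
  "weights n l = {lam. \<forall>i. i \<notin> {1..dimU n l} \<longrightarrow> lam i = 0}"

definition bform :: "(nat \<Rightarrow> nat) \<Rightarrow> (nat \<Rightarrow> bool) \<Rightarrow> nat \<Rightarrow> (nat \<Rightarrow> int) \<Rightarrow> (nat \<Rightarrow> int) \<Rightarrow> int" where
  "bform n c l lam mu = (\<Sum>i=1..dimU n l. sg n c l i * lam i * mu i)"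

definition delta :: "nat \<Rightarrow> nat \<Rightarrow> int" where
  "delta i = (\<lambda>j. if j = i then 1 else 0)"

definition rho :: "(nat \<Rightarrow> nat) \<Rightarrow> (nat \<Rightarrow> bool) \<Rightarrow> nat \<Rightarrow> nat \<Rightarrow> int" where
  "rho n c l j = (if j \<in> {1..dimU n l} then
      - (\<Sum>i\<in>{1..<j}. sg n c l i * sg n c l j) - (if par n c l j then 1 else 0)
    else 0)"

definition ip :: "(nat \<Rightarrow> nat) \<Rightarrow> (nat \<Rightarrow> bool) \<Rightarrow> nat \<Rightarrow> (nat \<Rightarrow> int) \<Rightarrow> nat \<Rightarrow> int" where
  "ip n c l lam i = bform n c l (\<lambda>j. lam j + rho n c l j) (delta i)"

definition cnt :: "(nat \<Rightarrow> nat) \<Rightarrow> (nat \<Rightarrow> bool) \<Rightarrow> nat \<Rightarrow> (nat \<Rightarrow> int) \<Rightarrow> nat \<Rightarrow> int \<Rightarrow> int" where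
  "cnt n c l lam j h = (\<Sum>i\<in>{i\<in>{1..j}. ip n c l lam i \<le> h}. sg n c l i)"

definition bruhat_le :: "(nat \<Rightarrow> nat) \<Rightarrow> (nat \<Rightarrow> bool) \<Rightarrow> nat \<Rightarrow> (nat \<Rightarrow> int) \<Rightarrow> (nat \<Rightarrow> int) \<Rightarrow> bool" where
  "bruhat_le n c l lam mu \<longleftrightarrow>
     (\<forall>h::int. \<forall>j\<in>{1..dimU n l}. cnt n c l lam j h \<ge> cnt n c l mu j h) \<and>
     (\<forall>h::int. cnt n c l lam (dimU n l) h = cnt n c l mu (dimU n l) h)"

definition Lam :: "(nat \<Rightarrow> nat) \<Rightarrow> (nat \<Rightarrow> bool) \<Rightarrow> nat \<Rightarrow> (nat \<Rightarrow> int) set" where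
  "Lam n c l = {lam \<in> weights n l. \<forall>k\<in>{1..l}. \<forall>i. psum n (k-1) < i \<and> i < psum n k \<longrightarrow>
      (if c k then -1 else 1) *
        bform n c l (\<lambda>j. lam j + rho n c l j) (\<lambda>j. delta i j - delta (i+1) j) > 0}"

end

theory Submission
  imports Defs
begin

text \<open>On each block \<open>U\<^sub>k\<close> the condition defining \<open>\<Lambda>\<close> makes \<open>i \<mapsto> (\<lambda>+\<rho>,\<delta>\<^sub>i)\<close>
  strictly monotone, increasing on odd blocks and decreasing on even ones, and the same holds
  for \<open>\<mu>\<close>. So for a fixed threshold \<open>h\<close> the indices of the block counted for \<open>\<lambda>\<close> and for
  \<open>\<mu>\<close> are both initial, or both final, segments of the block, and the sign \<open>(-1)^p\<^sub>i\<close>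
  is constant there. Hence the difference of the two partial counts is monotone along the block,
  and its nonnegativity at the block boundaries propagates to every index inside.\<close>

lemma monotone_on_greaterThanAtMost_SucI:
  assumes "reflp R" "transp R"
    and succ: "\<And>j. a < j \<Longrightarrow> j < b \<Longrightarrow> R (f j) (f (Suc j))"
  shows "monotone_on {a<..b} (\<le>) R f"
proof (rule monotone_onI)
  fix i i' assume "i \<in> {a<..b}" "i' \<in> {a<..b}" "i \<le> i'"
  from \<open>i \<le> i'\<close> \<open>i' \<in> {a<..b}\<close> show "R (f i) (f i')"
  proof (induction i' rule: dec_induct)
    case base then show ?case using \<open>reflp R\<close> by (simp add: reflpD)
  next
    case (step m)
    have m: "m \<in> {a<..b}" using step \<open>i \<in> {a<..b}\<close> by auto
    then have "R (f i) (f m)" by (rule step.IH)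
    moreover have "R (f m) (f (Suc m))" using m step.prems by (intro succ) auto
    ultimately show ?case using \<open>transp R\<close> by (blast dest: transpD)
  qed
qed

lemma threshold_indicator_diff_sign:
  fixes f g :: "'a::linorder \<Rightarrow> 'b::preorder"
  assumes "mono_on B f \<and> mono_on B g \<or> antimono_on B f \<and> antimono_on B g"
  shows "(\<forall>i\<in>B. (0::int) \<le> of_bool (f i \<le> h) - of_bool (g i \<le> h)) \<or>
         (\<forall>i\<in>B. of_bool (f i \<le> h) - of_bool (g i \<le> h) \<le> (0::int))"
proof (rule ccontr)
  assume "\<not> ?thesis"
  then obtain i i' where B: "i \<in> B" "i' \<in> B"
    and "\<not> f i \<le> h" "g i \<le> h" "f i' \<le> h" "\<not> g i' \<le> h"
    by auto
  then have "\<not> f i \<le> f i'" "\<not> g i' \<le> g i"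
    using order_trans by blast+
  moreover have "i \<le> i' \<or> i' \<le> i" by (rule linear)
  ultimately show False
    using assms B by (auto dest: monotone_onD)
qed

lemma sum_nonneg_between:
  fixes e :: "nat \<Rightarrow> 'a::ordered_ab_group_add"
  assumes "a \<le> j" "j \<le> b"
    and sign: "(\<forall>i\<in>{a<..b}. 0 \<le> e i) \<or> (\<forall>i\<in>{a<..b}. e i \<le> 0)"
    and "0 \<le> sum e {1..a}" "0 \<le> sum e {1..b}"
  shows "0 \<le> sum e {1..j}"
proof -
  have split: "sum e {1..y} = sum e {1..x} + sum e {x<..y}" if "x \<le> y" for x y
  proof -
    have "{1..y} = {1..x} \<union> {x<..y}" using that by auto
    then show ?thesis by (simp add: sum.union_disjoint ivl_disj_int)
  qed
  from sign show ?thesis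
  proof
    assume "\<forall>i\<in>{a<..b}. 0 \<le> e i"
    then have "0 \<le> sum e {a<..j}" using assms(2) by (intro sum_nonneg) auto
    then show ?thesis using split[OF assms(1)] assms(4) by simp
  next
    assume "\<forall>i\<in>{a<..b}. e i \<le> 0"
    then have "sum e {j<..b} \<le> 0" using assms(1) by (intro sum_nonpos) auto
    then show ?thesis using split[OF assms(2)] assms(5)
      by (metis add_le_same_cancel1 order_trans)
  qed
qed

definition block :: "(nat \<Rightarrow> nat) \<Rightarrow> nat \<Rightarrow> nat set" where
  "block n k = {psum n (k-1)<..psum n k}"

lemma psum_mono: "k \<le> k' \<Longrightarrow> psum n k \<le> psum n k'"
  unfolding psum_def by (rule sum_mono2) auto

lemma psum_0 [simp]: "psum n 0 = 0"
  unfolding psum_def by simp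

lemma ex_block:
  assumes "j \<in> {1..psum n l}"
  shows "\<exists>k\<in>{1..l}. j \<in> block n k"
proof -
  define k where "k = (LEAST k. j \<le> psum n k)"
  have "j \<le> psum n l" using assms by simp
  then have "k \<le> l" "j \<le> psum n k" unfolding k_def by (auto intro: Least_le LeastI)
  moreover have "k \<ge> 1" using \<open>j \<le> psum n k\<close> assms by (cases k) auto
  moreover have "\<not> j \<le> psum n (k-1)"
    using \<open>k \<ge> 1\<close> unfolding k_def by (intro not_less_Least) (simp add: k_def)
  ultimately show ?thesis by (intro bexI[of _ k]) (auto simp: block_def)
qed

lemma par_eq_block_parity:
  assumes "k \<in> {1..l}" "i \<in> block n k"
  shows "par n c l i \<longleftrightarrow> c k"
proof
  assume "par n c l i"
  then obtain k' where k': "k' \<in> {1..l}" "i \<in> block n k'" "c k'"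
    unfolding par_def block_def by auto
  have "k' = k"
  proof (rule ccontr)
    assume "k' \<noteq> k"
    then have "psum n k' \<le> psum n (k-1) \<or> psum n k \<le> psum n (k'-1)"
      using psum_mono[of k' "k-1" n] psum_mono[of k "k'-1" n] by linarith
    then show False using assms(2) k'(2) by (auto simp: block_def)
  qed
  with k' show "c k" by simp
next
  assume "c k"
  with assms show "par n c l i" unfolding par_def block_def by auto
qed

lemma bform_diff_right:
  "bform n c l x (\<lambda>j. y j - z j) = bform n c l x y - bform n c l x z"
  unfolding bform_def by (simp add: sum_subtractf[symmetric] algebra_simps)

lemma ip_step:
  assumes "lam \<in> Lam n c l" "k \<in> {1..l}" "psum n (k-1) < i" "i < psum n k"
  shows "if c k then ip n c l lam i < ip n c l lam (Suc i)
         else ip n c l lam (Suc i) < ip n c l lam i"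
proof -
  have "0 < (if c k then -1 else 1) *
      bform n c l (\<lambda>j. lam j + rho n c l j) (\<lambda>j. delta i j - delta (i+1) j)"
    using assms unfolding Lam_def by blast
  then show ?thesis unfolding bform_diff_right ip_def by (auto split: if_splits)
qed

lemma ip_monotone_on_block:
  assumes "lam \<in> Lam n c l" "k \<in> {1..l}"
  shows "if c k then mono_on (block n k) (ip n c l lam)
         else antimono_on (block n k) (ip n c l lam)"
proof -
  have "if c k then ip n c l lam j \<le> ip n c l lam (Suc j) else ip n c l lam (Suc j) \<le> ip n c l lam j"
    if "psum n (k-1) < j" "j < psum n k" for j
    using ip_step[OF assms that] by (simp split: if_splits)
  then show ?thesis unfolding block_def
    by (cases "c k")
      (auto intro!: monotone_on_greaterThanAtMost_SucI simp: reflp_def transp_def)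
qed

lemma cnt_eq_sum:
  "cnt n c l lam j h = (\<Sum>i=1..j. if ip n c l lam i \<le> h then sg n c l i else 0)"
  unfolding cnt_def by (rule sum.inter_filter) simp

lemma cnt_le_in_block:
  assumes lam: "lam \<in> Lam n c l" and mu: "mu \<in> Lam n c l"
    and k: "k \<in> {1..l}" and j: "j \<in> block n k"
    and start: "cnt n c l mu (psum n (k-1)) h \<le> cnt n c l lam (psum n (k-1)) h"
    and stop: "cnt n c l mu (psum n k) h \<le> cnt n c l lam (psum n k) h"
  shows "cnt n c l mu j h \<le> cnt n c l lam j h"
proof -
  define e where "e i = (if ip n c l lam i \<le> h then sg n c l i else 0)
      - (if ip n c l mu i \<le> h then sg n c l i else 0)" for i
  have cnt_diff: "cnt n c l lam x h - cnt n c l mu x h = sum e {1..x}" for x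
    unfolding e_def cnt_eq_sum by (simp add: sum_subtractf)
  have e_block: "e i = (if c k then -1 else 1) *
      (of_bool (ip n c l lam i \<le> h) - of_bool (ip n c l mu i \<le> h))" if "i \<in> block n k" for i
    using par_eq_block_parity[OF k that] by (auto simp: e_def sg_def)
  have "(\<forall>i\<in>block n k. (0::int) \<le> of_bool (ip n c l lam i \<le> h) - of_bool (ip n c l mu i \<le> h)) \<or>
        (\<forall>i\<in>block n k. of_bool (ip n c l lam i \<le> h) - of_bool (ip n c l mu i \<le> h) \<le> (0::int))"
    using ip_monotone_on_block[OF lam k] ip_monotone_on_block[OF mu k]
    by (intro threshold_indicator_diff_sign) (simp split: if_splits)
  then have "(\<forall>i\<in>block n k. 0 \<le> e i) \<or> (\<forall>i\<in>block n k. e i \<le> 0)"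
    using e_block by (cases "c k") auto
  moreover have "0 \<le> sum e {1..psum n (k-1)}" "0 \<le> sum e {1..psum n k}"
    using start stop cnt_diff by (metis diff_ge_0_iff_ge)+
  ultimately have "0 \<le> sum e {1..j}"
    using j by (intro sum_nonneg_between[of "psum n (k-1)" j "psum n k"]) (auto simp: block_def)
  then show ?thesis using cnt_diff[of j] by simp
qed

theorem lemma3p9:
  fixes n :: "nat \<Rightarrow> nat" and c :: "nat \<Rightarrow> bool" and l :: nat
    and lam mu :: "nat \<Rightarrow> int"
  assumes "lam \<in> Lam n c l" and "mu \<in> Lam n c l"
  shows "bruhat_le n c l lam mu \<longleftrightarrow>
    ((\<forall>h::int. \<forall>k\<in>{1..l}. cnt n c l lam (psum n k) h \<ge> cnt n c l mu (psum n k) h) \<and>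
     (\<forall>h::int. cnt n c l lam (psum n l) h = cnt n c l mu (psum n l) h))"
    (is "_ \<longleftrightarrow> ?blocks \<and> ?total")
proof
  assume le: "bruhat_le n c l lam mu"
  have "cnt n c l mu (psum n k) h \<le> cnt n c l lam (psum n k) h" if "k \<in> {1..l}" for k h
  proof (cases "psum n k = 0")
    case True
    then show ?thesis by (simp add: cnt_eq_sum)
  next
    case False
    then have "psum n k \<in> {1..dimU n l}"
      using that psum_mono[of k l n] by (auto simp: dimU_def)
    then show ?thesis using le unfolding bruhat_le_def by blast
  qed
  then show "?blocks \<and> ?total" using le unfolding bruhat_le_def dimU_def by blast
next
  assume "?blocks \<and> ?total"
  then have blocks: ?blocks and total: ?total by simp_all
  have boundary: "cnt n c l mu (psum n k) h \<le> cnt n c l lam (psum n k) h"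
    if "k \<le> l" for k h
    using blocks that by (cases k) (auto simp: cnt_eq_sum)
  have "cnt n c l mu j h \<le> cnt n c l lam j h" if j: "j \<in> {1..dimU n l}" for j h
  proof -
    obtain k where "k \<in> {1..l}" "j \<in> block n k"
      using ex_block[of j n l] j by (auto simp: dimU_def)
    then show ?thesis
      using cnt_le_in_block[OF assms] boundary[of "k-1"] boundary[of k] by auto
  qed
  with total show "bruhat_le n c l lam mu" unfolding bruhat_le_def dimU_def by blast
qed

end
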